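(* In the setting below, let $(x^{(k)},z^{(k)})$ be generated by the Bregman PD3O algorithm \[x^{(k+1)}=\mathrm{prox}^{\phi_{\mathrm p}}_{\tau f}\big(x^{(k)},\tau A^Tz^{(k)}+\tau\nabla h(x^{(k)})\big),\] \[z^{(k+1)}=\mathrm{prox}^{\phi_{\mathrm d}}_{\sigma g^*}\Big(z^{(k)},-\sigma A\big(2x^{(k+1)}-x^{(k)}+\tau(\nabla h(x^{(k)})-\nabla h(x^{(k+1)}))\big)\Big),\] with $x^{(0)}\in\operatorname{int}(\operatorname{dom}\phi_{\mathrm p})$, $z^{(0)}\in\operatorname{int}(\operatorname{dom}\phi_{\mathrm d})$. Then for every $k\ge0$, all $x\in\operatorname{dom}f\cap\operatorname{dom}\phi_{\mathrm p}$ and all $z\in\operatorname{dom}g^*\cap\operatorname{dom}\phi_{\mathrm d}$, \begin{align*}\mathcal L(x^{(k+1)},z)-\mathcal L(x,z^{(k+1)})\le{}& d_{\mathrm{pd3o}}\big(x,\nabla h(x),z;x^{(k)},\nabla h(x^{(k)}),z^{(k)}\big)-d_{\mathrm{pd3o}}\big(x,\nabla h(x),z;x^{(k+1)},\nabla h(x^{(k+1)}),z^{(k+1)}\big)\\&-d_{\mathrm{pd3o}}\big(x^{(k+1)},\nabla h(x),z^{(k+1)};x^{(k)},\nabla h(x^{(k)}),z^{(k)}\big).\end{align*}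
   Context: Setting: $f:\mathbb R^n\to\mathbb R\cup\{+\infty\}$ and $g:\mathbb R^m\to\mathbb R\cup\{+\infty\}$ closed convex, $g$ and $f+h$ proper, $A\in\mathbb R^{m\times n}$, $g^*$ the conjugate of $g$. $h:\mathbb R^n\to\mathbb R$ is convex and differentiable with $h(y)-h(x)-\langle\nabla h(x),y-x\rangle\le\frac L2\|y-x\|^2$ for all $x,y$ (Euclidean norm), $L>0$. Lagrangian $\mathcal L(x,z)=f(x)+h(x)+\langle z,Ax\rangle-g^*(z)$ (value $+\infty$ if $x\notin\operatorname{dom}f$, $-\infty$ if $x\in\operatorname{dom}f$, $z\notin\operatorname{dom}g^*$). A Bregman kernel $\phi$ is convex with $\operatorname{int}(\operatorname{dom}\phi)\ne\emptyset$, continuous on $\operatorname{dom}\phi$, continuously differentiable on the interior; distance $d(x,y)=\phi(x)-\phi(y)-\langle\nabla\phi(y),x-y\rangle$ on $\operatorname{dom}\phi\times\operatorname{int}(\operatorname{dom}\phi)$; $\mathrm{prox}^\phi_F(y,a)=\operatorname{argmin}_x\big(F(x)+\langle a,x\rangle+d(x,y)\big)$, assumed to be a unique point of $\operatorname{int}(\operatorname{dom}\phi)$ for all $a$ and $y\in\operatorname{int}(\operatorname{dom}\phi)$. Kernels $\phi_{\mathrm p}$ (on $\mathbb R^n$), $\phi_{\mathrm d}$ (on $\mathbb R^m$) have distances with $d_{\mathrm p}(x,x')\ge\frac12\|x-x'\|^2$ and $d_{\mathrm d}(z,z')\ge\frac12\|z-z'\|_{\mathrm d}^2$ for a norm $\|\cdot\|_{\mathrm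 d}$. $\|A\|=\sup_{v\ne0}\|Av\|_{\mathrm d,*}/\|v\|$ with $\|\cdot\|_{\mathrm d,*}$ the dual norm. Stepsizes $\sigma,\tau>0$ satisfy $\sigma\tau\|A\|^2\le1$ and $\tau\le1/L$. The optimality conditions $0\in\partial f(x)+\nabla h(x)+A^Tz$, $0\in\partial g^*(z)-Ax$ have a solution in $\operatorname{dom}\phi_{\mathrm p}\times\operatorname{dom}\phi_{\mathrm d}$. Finally $d_{\mathrm{pd3o}}(x,y,z;x',y',z')=\frac1\tau d_{\mathrm p}(x,x')+\frac1\sigma d_{\mathrm d}(z,z')+\frac\tau2\|y-y'\|^2-\langle y-y',x-x'\rangle-\langle z-z',A(x-x')\rangle+\tau\langle z-z',A(y-y')\rangle$. *)

theory Defs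
  imports "HOL-Analysis.Analysis"
begin

definition edom :: "('a \<Rightarrow> ereal) \<Rightarrow> 'a set" where
  "edom F = {x. F x < \<infinity>}"

definition epigraph :: "('a \<Rightarrow> ereal) \<Rightarrow> ('a \<times> real) set" where
  "epigraph F = {(x, r). F x \<le> ereal r}"

definition convex_fun :: "('a::real_vector \<Rightarrow> ereal) \<Rightarrow> bool" where
  "convex_fun F \<longleftrightarrow> convex (epigraph F)"

definition closed_fun :: "('a::topological_space \<Rightarrow> ereal) \<Rightarrow> bool" where
  "closed_fun F \<longleftrightarrow> closed (epigraph F)"

definition proper_fun :: "('a \<Rightarrow> ereal) \<Rightarrow> bool" where
  "proper_fun F \<longleftrightarrow> (\<exists>x. F x < \<infinity>) \<and> (\<forall>x. F x > -\<infinity>)"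

definition conjugate :: "('a::real_inner \<Rightarrow> ereal) \<Rightarrow> 'a \<Rightarrow> ereal" where
  "conjugate g z = (SUP y. ereal (z \<bullet> y) - g y)"

definition subdiff :: "('a::real_inner \<Rightarrow> ereal) \<Rightarrow> 'a \<Rightarrow> 'a set" where
  "subdiff F x = {v. \<bar>F x\<bar> \<noteq> \<infinity> \<and> (\<forall>y. F y \<ge> F x + ereal (v \<bullet> (y - x)))}"

definition is_norm :: "('a::real_vector \<Rightarrow> real) \<Rightarrow> bool" where
  "is_norm N \<longleftrightarrow> (\<forall>x. N x \<ge> 0) \<and> (\<forall>x. N x = 0 \<longleftrightarrow> x = 0)
     \<and> (\<forall>c x. N (c *\<^sub>R x) = \<bar>c\<bar> * N x) \<and> (\<forall>x y. N (x + y) \<le> N x + N y)"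

definition dual_norm :: "('a::real_inner \<Rightarrow> real) \<Rightarrow> 'a \<Rightarrow> real" where
  "dual_norm N w = Sup {w \<bullet> v | v. N v \<le> 1}"

definition op_norm_d :: "(real^'m \<Rightarrow> real) \<Rightarrow> real^'n^'m \<Rightarrow> real" where
  "op_norm_d N A = Sup {dual_norm N (A *v v) / norm v | v. v \<noteq> 0}"

definition bregman_kernel :: "('a::euclidean_space \<Rightarrow> ereal) \<Rightarrow> ('a \<Rightarrow> 'a) \<Rightarrow> bool" where
  "bregman_kernel \<phi> d\<phi> \<longleftrightarrow> convex_fun \<phi> \<and> (\<forall>x. \<phi> x > -\<infinity>)
     \<and> interior (edom \<phi>) \<noteq> {}
     \<and> continuous_on (edom \<phi>) (\<lambda>x. real_of_ereal (\<phi> x))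
     \<and> (\<forall>x\<in>interior (edom \<phi>). ((\<lambda>y. real_of_ereal (\<phi> y)) has_derivative (\<lambda>v. d\<phi> x \<bullet> v)) (at x))
     \<and> continuous_on (interior (edom \<phi>)) d\<phi>"

definition bdist :: "('a::real_inner \<Rightarrow> ereal) \<Rightarrow> ('a \<Rightarrow> 'a) \<Rightarrow> 'a \<Rightarrow> 'a \<Rightarrow> real" where
  "bdist \<phi> d\<phi> x y = real_of_ereal (\<phi> x) - real_of_ereal (\<phi> y) - d\<phi> y \<bullet> (x - y)"

definition prox_obj :: "('a::real_inner \<Rightarrow> ereal) \<Rightarrow> ('a \<Rightarrow> ereal) \<Rightarrow> ('a \<Rightarrow> 'a) \<Rightarrow> 'a \<Rightarrow> 'a \<Rightarrow> 'a \<Rightarrow> ereal" where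
  "prox_obj F \<phi> d\<phi> y a x =
     (if x \<in> edom \<phi> then F x + ereal (a \<bullet> x + bdist \<phi> d\<phi> x y) else \<infinity>)"

definition is_prox :: "('a::real_inner \<Rightarrow> ereal) \<Rightarrow> ('a \<Rightarrow> ereal) \<Rightarrow> ('a \<Rightarrow> 'a) \<Rightarrow> 'a \<Rightarrow> 'a \<Rightarrow> 'a \<Rightarrow> bool" where
  "is_prox F \<phi> d\<phi> y a p \<longleftrightarrow> (\<forall>x. prox_obj F \<phi> d\<phi> y a p \<le> prox_obj F \<phi> d\<phi> y a x)"

definition bprox :: "('a::real_inner \<Rightarrow> ereal) \<Rightarrow> ('a \<Rightarrow> ereal) \<Rightarrow> ('a \<Rightarrow> 'a) \<Rightarrow> 'a \<Rightarrow> 'a \<Rightarrow> 'a" where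
  "bprox F \<phi> d\<phi> y a = (THE p. is_prox F \<phi> d\<phi> y a p)"

definition prox_wellposed :: "('a::real_inner \<Rightarrow> ereal) \<Rightarrow> ('a \<Rightarrow> ereal) \<Rightarrow> ('a \<Rightarrow> 'a) \<Rightarrow> bool" where
  "prox_wellposed F \<phi> d\<phi> \<longleftrightarrow> (\<forall>a. \<forall>y\<in>interior (edom \<phi>).
     (\<exists>!p. is_prox F \<phi> d\<phi> y a p) \<and> (\<forall>p. is_prox F \<phi> d\<phi> y a p \<longrightarrow> p \<in> interior (edom \<phi>)))"

definition lagrangian :: "(real^'n \<Rightarrow> ereal) \<Rightarrow> (real^'n \<Rightarrow> real) \<Rightarrow> real^'n^'m
     \<Rightarrow> (real^'m \<Rightarrow> ereal) \<Rightarrow> real^'n \<Rightarrow> real^'m \<Rightarrow> ereal" where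
  "lagrangian f h A g x z =
     (if x \<notin> edom f then \<infinity>
      else if z \<notin> edom (conjugate g) then -\<infinity>
      else f x + ereal (h x + z \<bullet> (A *v x)) - conjugate g z)"

definition d_pd3o :: "real \<Rightarrow> real \<Rightarrow> real^'n^'m \<Rightarrow> (real^'n \<Rightarrow> real^'n \<Rightarrow> real)
     \<Rightarrow> (real^'m \<Rightarrow> real^'m \<Rightarrow> real)
     \<Rightarrow> real^'n \<Rightarrow> real^'n \<Rightarrow> real^'m \<Rightarrow> real^'n \<Rightarrow> real^'n \<Rightarrow> real^'m \<Rightarrow> real" where
  "d_pd3o \<tau> \<sigma> A dp dd x y z x' y' z' =
     (1/\<tau>) * dp x x' + (1/\<sigma>) * dd z z' + (\<tau>/2) * (norm (y - y'))\<^sup>2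
     - (y - y') \<bullet> (x - x') - (z - z') \<bullet> (A *v (x - x')) + \<tau> * ((z - z') \<bullet> (A *v (y - y')))"

end

theory Submission
  imports Defs
begin

(* Each prox step obeys a three-point inequality: since phi is differentiable at the
   interior point x^(k+1), a one-sided difference quotient of the prox objective along the
   segment towards x gives the first-order optimality condition, and the three-point identity
   of the Bregman distance turns it into a telescoping bound. Adding the primal and dual
   inequalities to the co-coercivity bound
   h x >= h x' + <grad h x', x - x'> + |grad h x - grad h x'|^2 / (2 L)
   and using tau <= 1/L, the remaining bilinear terms in A regroup exactly into the three
   d_pd3o expressions. *)

lemma directional_quotient_tendsto:
  fixes F :: "'a::real_inner \<Rightarrow> real"
  assumes "(F has_derivative (\<lambda>v. G \<bullet> v)) (at p)"
  shows "((\<lambda>t. (F (p + t *\<^sub>R d) - F p) / t) \<longlongrightarrow> G \<bullet> d) (at_right 0)"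
proof -
  have "((\<lambda>t::real. p + t *\<^sub>R d) has_derivative (\<lambda>s. s *\<^sub>R d)) (at 0)"
    by (auto intro!: derivative_eq_intros)
  moreover have "(F has_derivative (\<lambda>v. G \<bullet> v)) (at ((\<lambda>t::real. p + t *\<^sub>R d) 0))"
    using assms by simp
  ultimately have "((\<lambda>t. F (p + t *\<^sub>R d)) has_derivative (\<lambda>s. G \<bullet> (s *\<^sub>R d))) (at 0)"
    by (rule has_derivative_compose)
  then have "((\<lambda>t. F (p + t *\<^sub>R d)) has_field_derivative G \<bullet> d) (at 0)"
    by (rule has_derivative_imp_has_field_derivative) simp
  then have "((\<lambda>t. F (p + t *\<^sub>R d)) has_field_derivative G \<bullet> d) (at 0 within {0<..})"
    by (rule has_field_derivative_at_within)
  then show ?thesis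
    by (simp add: has_field_derivative_iff at_within_open)
qed

lemma directional_derivative_ge:
  fixes F :: "'a::real_inner \<Rightarrow> real"
  assumes "(F has_derivative (\<lambda>v. G \<bullet> v)) (at p)"
    and "\<And>t. 0 < t \<Longrightarrow> t \<le> 1 \<Longrightarrow> c * t \<le> F (p + t *\<^sub>R d) - F p"
  shows "c \<le> G \<bullet> d"
proof (rule tendsto_lowerbound[OF directional_quotient_tendsto[OF assms(1)]])
  have "\<forall>\<^sub>F t in at_right (0::real). 0 < t \<and> t < 1"
    by (intro eventually_conj eventually_at_right_less)
      (auto simp: eventually_at_right_field intro: exI[of _ 1])
  then show "\<forall>\<^sub>F t in at_right 0. c \<le> (F (p + t *\<^sub>R d) - F p) / t"
    by eventually_elim (use assms(2) in \<open>simp add: pos_le_divide_eq\<close>)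
qed simp

lemma directional_derivative_le:
  fixes F :: "'a::real_inner \<Rightarrow> real"
  assumes "(F has_derivative (\<lambda>v. G \<bullet> v)) (at p)"
    and "\<And>t. 0 < t \<Longrightarrow> t \<le> 1 \<Longrightarrow> F (p + t *\<^sub>R d) - F p \<le> c * t"
  shows "G \<bullet> d \<le> c"
proof -
  have "((\<lambda>x. - F x) has_derivative (\<lambda>v. (- G) \<bullet> v)) (at p)"
    using has_derivative_minus[OF assms(1)] by simp
  moreover have "\<And>t. 0 < t \<Longrightarrow> t \<le> 1 \<Longrightarrow> (- c) * t \<le> - F (p + t *\<^sub>R d) - - F p"
    using assms(2) by fastforce
  ultimately have "- c \<le> (- G) \<bullet> d"
    by (rule directional_derivative_ge)
  then show ?thesis by simp
qed

lemma convex_on_gradient_ineq: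
  fixes h :: "'a::real_inner \<Rightarrow> real"
  assumes "convex_on UNIV h" and "(h has_derivative (\<lambda>v. G \<bullet> v)) (at x)"
  shows "h x + G \<bullet> (y - x) \<le> h y"
proof -
  have "G \<bullet> (y - x) \<le> h y - h x"
  proof (rule directional_derivative_le[OF assms(2)])
    fix t :: real
    assume t: "0 < t" "t \<le> 1"
    have "h ((1 - t) *\<^sub>R x + t *\<^sub>R y) \<le> (1 - t) * h x + t * h y"
      using assms(1) t by (intro convex_onD) auto
    moreover have "x + t *\<^sub>R (y - x) = (1 - t) *\<^sub>R x + t *\<^sub>R y"
      by (simp add: algebra_simps)
    ultimately show "h (x + t *\<^sub>R (y - x)) - h x \<le> (h y - h x) * t"
      by (simp add: algebra_simps)
  qed
  then show ?thesis by simp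
qed

text \<open>Apply the gradient inequality at \<open>x\<close> to the point \<open>y - (\<nabla>h y - \<nabla>h x) / L\<close>
  and the smoothness bound between \<open>y\<close> and that point.\<close>
lemma convex_smooth_gradient_ineq:
  fixes h :: "'a::real_inner \<Rightarrow> real"
  assumes conv: "convex_on UNIV h"
    and grad: "\<And>x. (h has_derivative (\<lambda>v. gh x \<bullet> v)) (at x)"
    and L: "L > 0"
    and smooth: "\<And>x y. h y - h x - gh x \<bullet> (y - x) \<le> L / 2 * (norm (y - x))\<^sup>2"
  shows "h x + gh x \<bullet> (y - x) + 1 / (2 * L) * (norm (gh y - gh x))\<^sup>2 \<le> h y"
proof -
  define \<delta> where "\<delta> = gh y - gh x"
  define w where "w = y - (1 / L) *\<^sub>R \<delta>"
  have below: "h x + gh x \<bullet> (w - x) \<le> h w"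
    by (rule convex_on_gradient_ineq[OF conv grad])
  have above: "h w - h y - gh y \<bullet> (w - y) \<le> L / 2 * (norm (w - y))\<^sup>2"
    by (rule smooth)
  have "L / 2 * (norm (w - y))\<^sup>2 = 1 / (2 * L) * (norm \<delta>)\<^sup>2"
    using L by (simp add: w_def power2_eq_square field_simps)
  moreover have "gh y \<bullet> (w - y) = - ((1 / L) * (gh y \<bullet> \<delta>))"
    by (simp add: w_def)
  moreover have "gh x \<bullet> (w - x) = gh x \<bullet> (y - x) - (1 / L) * (gh x \<bullet> \<delta>)"
    by (simp add: w_def inner_diff_right)
  moreover have "(1 / L) * (gh y \<bullet> \<delta>) - (1 / L) * (gh x \<bullet> \<delta>) = 2 * (1 / (2 * L) * (norm \<delta>)\<^sup>2)"
    using L by (simp add: \<delta>_def power2_norm_eq_inner inner_diff_left field_simps)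
  ultimately show ?thesis
    using below above unfolding \<delta>_def[symmetric] by linarith
qed

lemma convex_fun_segment:
  assumes "convex_fun F" "F u \<le> ereal a" "F v \<le> ereal b" "0 \<le> t" "t \<le> 1"
  shows "F ((1 - t) *\<^sub>R u + t *\<^sub>R v) \<le> ereal ((1 - t) * a + t * b)"
proof -
  have "(1 - t) *\<^sub>R (u, a) + t *\<^sub>R (v, b) \<in> epigraph F"
    using assms unfolding convex_fun_def by (intro convexD) (auto simp: epigraph_def)
  then show ?thesis by (simp add: epigraph_def)
qed

lemma ereal_cmult_le_iff:
  assumes "c > 0"
  shows "ereal c * e \<le> ereal r \<longleftrightarrow> e \<le> ereal (r / c)"
  using assms by (cases e) (auto simp: field_simps)

lemma convex_fun_cmult:
  assumes "convex_fun F" "c > 0"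
  shows "convex_fun (\<lambda>x. ereal c * F x)"
  unfolding convex_fun_def
proof (rule convexI)
  fix x y and u v :: real
  assume "x \<in> epigraph (\<lambda>x. ereal c * F x)" "y \<in> epigraph (\<lambda>x. ereal c * F x)"
    and uv: "0 \<le> u" "0 \<le> v" "u + v = 1"
  then have "F (fst x) \<le> ereal (snd x / c)" "F (fst y) \<le> ereal (snd y / c)"
    using assms(2) by (auto simp: epigraph_def ereal_cmult_le_iff split: prod.splits)
  from convex_fun_segment[OF assms(1) this, of v] uv
  have "F (u *\<^sub>R fst x + v *\<^sub>R fst y) \<le> ereal ((u * snd x + v * snd y) / c)"
    by (simp add: add_divide_distrib eq_diff_eq[symmetric])
  then show "u *\<^sub>R x + v *\<^sub>R y \<in> epigraph (\<lambda>x. ereal c * F x)"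
    using assms(2) by (simp add: epigraph_def ereal_cmult_le_iff case_prod_beta)
qed

lemma convex_fun_conjugate: "convex_fun (conjugate g)"
proof -
  have "epigraph (conjugate g) = (\<Inter>y. epigraph (\<lambda>z. ereal (z \<bullet> y) - g y))"
    by (auto simp: epigraph_def conjugate_def SUP_le_iff)
  moreover have "convex (epigraph (\<lambda>z. ereal (z \<bullet> y) - g y))" for y
  proof (cases "g y")
    case (real r)
    have "epigraph (\<lambda>z. ereal (z \<bullet> y) - g y) = {w. (y, -1) \<bullet> w \<le> r}"
      by (auto simp: epigraph_def real inner_commute)
    then show ?thesis by (simp add: convex_halfspace_le)
  qed (auto simp: epigraph_def)
  ultimately show ?thesis
    unfolding convex_fun_def by (simp add: convex_INT)
qed

lemma conjugate_gt_MInf: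
  assumes "proper_fun g"
  shows "conjugate g z > -\<infinity>"
proof -
  obtain y r where "g y = ereal r"
    using assms unfolding proper_fun_def by (metis less_ereal.simps(2,3) ereal_cases)
  moreover have "ereal (z \<bullet> y) - g y \<le> conjugate g z"
    unfolding conjugate_def by (rule SUP_upper) simp
  ultimately show ?thesis by auto
qed

lemma bdist_three_point:
  "bdist \<phi> d\<phi> x y - bdist \<phi> d\<phi> x p - bdist \<phi> d\<phi> p y = (d\<phi> p - d\<phi> y) \<bullet> (x - p)"
  by (simp add: bdist_def inner_diff_left inner_diff_right)

lemma bprox_is_prox:
  assumes "prox_wellposed F \<phi> d\<phi>" "y \<in> interior (edom \<phi>)"
  shows "is_prox F \<phi> d\<phi> y a (bprox F \<phi> d\<phi> y a)" "bprox F \<phi> d\<phi> y a \<in> interior (edom \<phi>)"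
proof -
  have "\<exists>!p. is_prox F \<phi> d\<phi> y a p"
    using assms unfolding prox_wellposed_def by blast
  then show "is_prox F \<phi> d\<phi> y a (bprox F \<phi> d\<phi> y a)"
    unfolding bprox_def by (rule theI')
  with assms show "bprox F \<phi> d\<phi> y a \<in> interior (edom \<phi>)"
    unfolding prox_wellposed_def by blast
qed

lemma is_prox_optimality:
  fixes F :: "'a::euclidean_space \<Rightarrow> ereal"
  assumes kernel: "bregman_kernel \<phi> d\<phi>"
    and F: "convex_fun F" "\<And>u. F u > -\<infinity>"
    and prox: "is_prox F \<phi> d\<phi> y a p" and p: "p \<in> interior (edom \<phi>)"
    and x: "x \<in> edom \<phi>" "F x < \<infinity>"
  shows "F p \<le> F x + ereal ((a + d\<phi> p - d\<phi> y) \<bullet> (x - p))"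
proof -
  define \<Phi> where "\<Phi> u = real_of_ereal (\<phi> u)" for u
  have \<phi>_conv: "convex_fun \<phi>"
    and \<phi>_deriv: "(\<Phi> has_derivative (\<lambda>v. d\<phi> p \<bullet> v)) (at p)"
    using kernel p unfolding bregman_kernel_def \<Phi>_def by auto
  have \<phi>_real: "\<phi> u = ereal (\<Phi> u)" if "u \<in> edom \<phi>" for u
    using that kernel unfolding bregman_kernel_def edom_def \<Phi>_def
    by (cases "\<phi> u") auto
  have p_dom: "p \<in> edom \<phi>"
    using p interior_subset by blast
  obtain Fx where Fx: "F x = ereal Fx"
    using x(2) F(2)[of x] by (cases "F x") auto
  have obj_le: "prox_obj F \<phi> d\<phi> y a p \<le> prox_obj F \<phi> d\<phi> y a w" for w
    using prox unfolding is_prox_def by blast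
  obtain Fp where Fp: "F p = ereal Fp"
    using obj_le[of x] F(2)[of p] p_dom x Fx by (cases "F p") (auto simp: prox_obj_def)
  define c where "c = Fp - Fx - a \<bullet> (x - p) + d\<phi> y \<bullet> (x - p)"
  have "c \<le> d\<phi> p \<bullet> (x - p)"
  proof (rule directional_derivative_ge[OF \<phi>_deriv])
    fix t :: real
    assume t: "0 < t" "t \<le> 1"
    define w where "w = p + t *\<^sub>R (x - p)"
    have w_comb: "w = (1 - t) *\<^sub>R p + t *\<^sub>R x"
      by (simp add: w_def algebra_simps)
    have "\<phi> w \<le> ereal ((1 - t) * \<Phi> p + t * \<Phi> x)"
      unfolding w_comb using t p_dom x by (intro convex_fun_segment[OF \<phi>_conv]) (auto simp: \<phi>_real)
    then have w_dom: "w \<in> edom \<phi>"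
      by (auto simp: edom_def)
    have "F w \<le> ereal ((1 - t) * Fp + t * Fx)"
      unfolding w_comb using t Fp Fx by (intro convex_fun_segment[OF F(1)]) auto
    then obtain Fw where Fw: "F w = ereal Fw" and Fw_le: "Fw \<le> (1 - t) * Fp + t * Fx"
      using F(2)[of w] by (cases "F w") auto
    have "Fp + (a \<bullet> p + bdist \<phi> d\<phi> p y) \<le> Fw + (a \<bullet> w + bdist \<phi> d\<phi> w y)"
      using obj_le[of w] p_dom w_dom Fp Fw by (simp add: prox_obj_def)
    then show "c * t \<le> \<Phi> (p + t *\<^sub>R (x - p)) - \<Phi> p"
      using Fw_le unfolding w_def[symmetric]
      by (simp add: c_def bdist_def \<Phi>_def w_def inner_add_right inner_diff_right algebra_simps)
  qed
  then show ?thesis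
    using Fx Fp by (simp add: c_def inner_add_left inner_diff_left)
qed

lemma bprox_scaled_descent:
  fixes F :: "'a::euclidean_space \<Rightarrow> ereal"
  assumes kernel: "bregman_kernel \<phi> d\<phi>"
    and F: "convex_fun F" "\<And>u. F u > -\<infinity>" and c: "c > 0"
    and wellposed: "prox_wellposed (\<lambda>u. ereal c * F u) \<phi> d\<phi>"
    and y: "y \<in> interior (edom \<phi>)" and x: "x \<in> edom F \<inter> edom \<phi>"
    and p: "p = bprox (\<lambda>u. ereal c * F u) \<phi> d\<phi> y (c *\<^sub>R a)"
  shows "p \<in> edom F"
    and "real_of_ereal (F p) - real_of_ereal (F x)
           \<le> a \<bullet> (x - p) + (bdist \<phi> d\<phi> x y - bdist \<phi> d\<phi> x p - bdist \<phi> d\<phi> p y) / c"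
proof -
  obtain Fx where Fx: "F x = ereal Fx"
    using x F(2)[of x] by (cases "F x") (auto simp: edom_def)
  have "ereal c * F p \<le> ereal c * F x + ereal ((c *\<^sub>R a + d\<phi> p - d\<phi> y) \<bullet> (x - p))"
    using x c Fx F(2) p bprox_is_prox[OF wellposed y]
    by (intro is_prox_optimality[OF kernel convex_fun_cmult[OF F(1) c]]) (auto simp: edom_def)
  moreover obtain Fp where Fp: "F p = ereal Fp"
    using calculation F(2)[of p] c Fx by (cases "F p") auto
  ultimately have "c * (Fp - Fx) \<le> c * (a \<bullet> (x - p)) + (d\<phi> p - d\<phi> y) \<bullet> (x - p)"
    using Fx by (simp add: inner_add_left inner_diff_left algebra_simps)
  then show "real_of_ereal (F p) - real_of_ereal (F x)
      \<le> a \<bullet> (x - p) + (bdist \<phi> d\<phi> x y - bdist \<phi> d\<phi> x p - bdist \<phi> d\<phi> p y) / c"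
    unfolding bdist_three_point using c Fx Fp by (simp add: field_simps)
  show "p \<in> edom F"
    using Fp by (simp add: edom_def)
qed

lemma proper_fun_add_gt_MInf:
  assumes "proper_fun (\<lambda>x. f x + ereal (h x))"
  shows "f x > -\<infinity>"
proof -
  have "f x + ereal (h x) > -\<infinity>"
    using assms unfolding proper_fun_def by blast
  then show ?thesis by (cases "f x") auto
qed

lemma lagrangian_real:
  assumes "x \<in> edom f" "f x > -\<infinity>" "z \<in> edom (conjugate g)" "conjugate g z > -\<infinity>"
  shows "lagrangian f h A g x z
    = ereal (real_of_ereal (f x) + h x + z \<bullet> (A *v x) - real_of_ereal (conjugate g z))"
  using assms by (cases "f x"; cases "conjugate g z") (auto simp: lagrangian_def edom_def)

lemma pd3o_gap_bound:
  fixes A :: "real^'n^'m" and x x1 xk gx g1 gk :: "real^'n" and z z1 zk :: "real^'m"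
  assumes primal: "fx1 - fx \<le> (transpose A *v zk + gk) \<bullet> (x - x1) + (dp x xk - dp x x1 - dp x1 xk) / \<tau>"
    and dual: "gz1 - gz \<le> - (A *v (2 *\<^sub>R x1 - xk + \<tau> *\<^sub>R (gk - g1))) \<bullet> (z - z1)
                            + (dd z zk - dd z z1 - dd z1 zk) / \<sigma>"
    and smooth: "hx1 + g1 \<bullet> (x - x1) + 1 / (2 * L) * (norm (gx - g1))\<^sup>2 \<le> hx"
    and L: "L > 0" "\<tau> \<le> 1 / L"
  shows "(fx1 + hx1 + z \<bullet> (A *v x1) - gz) - (fx + hx + z1 \<bullet> (A *v x) - gz1)
    \<le> d_pd3o \<tau> \<sigma> A dp dd x gx z xk gk zk - d_pd3o \<tau> \<sigma> A dp dd x gx z x1 g1 z1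
       - d_pd3o \<tau> \<sigma> A dp dd x1 gx z1 xk gk zk"
proof -
  have "(transpose A *v zk + gk) \<bullet> (x - x1) + g1 \<bullet> (x1 - x) + (z \<bullet> (A *v x1) - z1 \<bullet> (A *v x))
      + - (A *v (2 *\<^sub>R x1 - xk + \<tau> *\<^sub>R (gk - g1))) \<bullet> (z - z1)
    = (gk - g1) \<bullet> (x - x1) - (z - z1) \<bullet> (A *v (x1 - xk)) - (z1 - zk) \<bullet> (A *v (x - x1))
      + \<tau> * ((z - z1) \<bullet> (A *v (g1 - gk)))"
    by (simp add: transpose_matrix_vector dot_lmul_matrix inner_add_left inner_add_right
        inner_diff_left inner_diff_right matrix_vector_mult_diff_distrib matrix_vector_right_distrib
        matrix_vector_mult_scaleR inner_commute[of "A *v _"] algebra_simps)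
  moreover have "d_pd3o \<tau> \<sigma> A dp dd x gx z xk gk zk - d_pd3o \<tau> \<sigma> A dp dd x gx z x1 g1 z1
      - d_pd3o \<tau> \<sigma> A dp dd x1 gx z1 xk gk zk
    = (dp x xk - dp x x1 - dp x1 xk) / \<tau> + (dd z zk - dd z z1 - dd z1 zk) / \<sigma>
      - \<tau> / 2 * (norm (gx - g1))\<^sup>2
      + ((gk - g1) \<bullet> (x - x1) - (z - z1) \<bullet> (A *v (x1 - xk)) - (z1 - zk) \<bullet> (A *v (x - x1))
      + \<tau> * ((z - z1) \<bullet> (A *v (g1 - gk))))"
    unfolding d_pd3o_def
    by (simp add: inner_add_left inner_add_right inner_diff_left inner_diff_right
        matrix_vector_mult_diff_distrib matrix_vector_right_distrib matrix_vector_mult_scaleR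
        diff_divide_distrib add_divide_distrib algebra_simps)
  moreover have "\<tau> / 2 * (norm (gx - g1))\<^sup>2 \<le> 1 / (2 * L) * (norm (gx - g1))\<^sup>2"
    using L by (intro mult_right_mono) (simp_all add: field_simps)
  moreover have "g1 \<bullet> (x1 - x) = - (g1 \<bullet> (x - x1))"
    by (simp add: inner_diff_right)
  ultimately show ?thesis
    using primal dual smooth by linarith
qed

theorem mainTheorem8:
  fixes f :: "real^'n \<Rightarrow> ereal" and g :: "real^'m \<Rightarrow> ereal"
    and h :: "real^'n \<Rightarrow> real" and gh :: "real^'n \<Rightarrow> real^'n"
    and A :: "real^'n^'m" and L \<sigma> \<tau> :: real
    and \<phi>p :: "real^'n \<Rightarrow> ereal" and d\<phi>p :: "real^'n \<Rightarrow> real^'n"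
    and \<phi>d :: "real^'m \<Rightarrow> ereal" and d\<phi>d :: "real^'m \<Rightarrow> real^'m"
    and nd :: "real^'m \<Rightarrow> real"
    and xs :: "nat \<Rightarrow> real^'n" and zs :: "nat \<Rightarrow> real^'m"
  assumes f_cc: "convex_fun f" "closed_fun f"
    and g_cc: "convex_fun g" "closed_fun g" "proper_fun g"
    and fh_proper: "proper_fun (\<lambda>x. f x + ereal (h x))"
    and h_conv: "convex_on UNIV h"
    and h_grad: "\<And>x. (h has_derivative (\<lambda>v. gh x \<bullet> v)) (at x)"
    and L_pos: "L > 0"
    and h_smooth: "\<And>x y. h y - h x - gh x \<bullet> (y - x) \<le> L / 2 * (norm (y - x))\<^sup>2"
    and kp: "bregman_kernel \<phi>p d\<phi>p" and kd: "bregman_kernel \<phi>d d\<phi>d"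
    and nd_norm: "is_norm nd"
    and dp_strong: "\<And>x x'. x \<in> edom \<phi>p \<Longrightarrow> x' \<in> interior (edom \<phi>p) \<Longrightarrow>
                       bdist \<phi>p d\<phi>p x x' \<ge> 1/2 * (norm (x - x'))\<^sup>2"
    and dd_strong: "\<And>z z'. z \<in> edom \<phi>d \<Longrightarrow> z' \<in> interior (edom \<phi>d) \<Longrightarrow>
                       bdist \<phi>d d\<phi>d z z' \<ge> 1/2 * (nd (z - z'))\<^sup>2"
    and steps: "\<sigma> > 0" "\<tau> > 0" "\<sigma> * \<tau> * (op_norm_d nd A)\<^sup>2 \<le> 1" "\<tau> \<le> 1 / L"
    and prox_p: "prox_wellposed (\<lambda>x. ereal \<tau> * f x) \<phi>p d\<phi>p"
    and prox_d: "prox_wellposed (\<lambda>z. ereal \<sigma> * conjugate g z) \<phi>d d\<phi>d"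
    and saddle: "\<exists>xo zo. xo \<in> edom \<phi>p \<and> zo \<in> edom \<phi>d
                   \<and> - (gh xo + transpose A *v zo) \<in> subdiff f xo
                   \<and> A *v xo \<in> subdiff (conjugate g) zo"
    and x0: "xs 0 \<in> interior (edom \<phi>p)" and z0: "zs 0 \<in> interior (edom \<phi>d)"
    and x_step: "\<And>k. xs (Suc k) = bprox (\<lambda>x. ereal \<tau> * f x) \<phi>p d\<phi>p (xs k)
                        (\<tau> *\<^sub>R (transpose A *v zs k) + \<tau> *\<^sub>R gh (xs k))"
    and z_step: "\<And>k. zs (Suc k) = bprox (\<lambda>z. ereal \<sigma> * conjugate g z) \<phi>d d\<phi>d (zs k)
                        (- \<sigma> *\<^sub>R (A *v (2 *\<^sub>R xs (Suc k) - xs k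
                                 + \<tau> *\<^sub>R (gh (xs k) - gh (xs (Suc k))))))"
    and x_dom: "x \<in> edom f \<inter> edom \<phi>p"
    and z_dom: "z \<in> edom (conjugate g) \<inter> edom \<phi>d"
  shows "lagrangian f h A g (xs (Suc k)) z - lagrangian f h A g x (zs (Suc k))
     \<le> ereal (d_pd3o \<tau> \<sigma> A (bdist \<phi>p d\<phi>p) (bdist \<phi>d d\<phi>d) x (gh x) z (xs k) (gh (xs k)) (zs k)
        - d_pd3o \<tau> \<sigma> A (bdist \<phi>p d\<phi>p) (bdist \<phi>d d\<phi>d) x (gh x) z (xs (Suc k)) (gh (xs (Suc k))) (zs (Suc k))
        - d_pd3o \<tau> \<sigma> A (bdist \<phi>p d\<phi>p) (bdist \<phi>d d\<phi>d) (xs (Suc k)) (gh x) (zs (Suc k)) (xs k) (gh (xs k)) (zs k))"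
proof -
  have f_gt: "f u > -\<infinity>" for u
    using fh_proper by (rule proper_fun_add_gt_MInf)
  have g_gt: "conjugate g z' > -\<infinity>" for z'
    using g_cc(3) by (rule conjugate_gt_MInf)
  have iterates_interior: "xs j \<in> interior (edom \<phi>p) \<and> zs j \<in> interior (edom \<phi>d)" for j
    by (induction j) (use x0 z0 bprox_is_prox(2)[OF prox_p] bprox_is_prox(2)[OF prox_d] x_step z_step in auto)
  have x_next: "xs (Suc k) = bprox (\<lambda>x. ereal \<tau> * f x) \<phi>p d\<phi>p (xs k)
      (\<tau> *\<^sub>R (transpose A *v zs k + gh (xs k)))"
    using x_step[of k] by (simp only: scaleR_right_distrib)
  have z_next: "zs (Suc k) = bprox (\<lambda>z. ereal \<sigma> * conjugate g z) \<phi>d d\<phi>d (zs k)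
      (\<sigma> *\<^sub>R - (A *v (2 *\<^sub>R xs (Suc k) - xs k + \<tau> *\<^sub>R (gh (xs k) - gh (xs (Suc k))))))"
    using z_step[of k] by (simp only: scaleR_minus_left scaleR_minus_right)
  note primal = bprox_scaled_descent[OF kp f_cc(1) f_gt steps(2) prox_p
      conjunct1[OF iterates_interior[of k]] x_dom x_next]
  note dual = bprox_scaled_descent[OF kd convex_fun_conjugate g_gt steps(1) prox_d
      conjunct2[OF iterates_interior[of k]] z_dom z_next]
  show ?thesis
    using pd3o_gap_bound[OF primal(2) dual(2)
        convex_smooth_gradient_ineq[OF h_conv h_grad L_pos h_smooth] L_pos steps(4)] x_dom z_dom
    by (simp add: lagrangian_real[OF primal(1) f_gt _ g_gt] lagrangian_real[OF _ f_gt dual(1) g_gt])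
qed

end
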